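(* Let $\Omega$ be a finite set, let $k \geq 2$ be an integer and let $f \colon \mathbb{N}_0 \to \Omega$ be a sequence. Then the following are equivalent: (1) $f$ is asymptotically $k$-automatic; (2) there exist $d \in \mathbb{N}$, sequences $f_0,f_1,\dots,f_{d-1}\colon \mathbb{N}_0\to\Omega$ and a $k$-automatic map $\phi\colon \Sigma_k^* \to \Sigma_d$ such that for each word $u \in \Sigma_k^*$ of length $\alpha := |u|$ we have $f(k^\alpha n + [u]_k) = f_{\phi(u)}(n)$ for almost all $n \in \mathbb{N}_0$.
   Context: $\mathbb{N}_0=\{0,1,2,\dots\}$, $\mathbb{N}=\{1,2,\dots\}$. For $A\subset\mathbb{N}_0$, $\bar d(A) = \limsup_{N\to\infty} |A\cap\{0,\dots,N-1\}|/N$; a property holds for almost all $n\in\mathbb{N}_0$ if the set of $n$ where it fails has upper density $0$. Sequences $f,g\colon\mathbb{N}_0\to\Omega$ are asymptotically equal, $f\simeq g$, if $f(n)=g(n)$ for almost all $n$. The $k$-kernel of a sequence $f$ is $\mathcal{N}_k(f) = \{ n \mapsto f(k^\alpha n + r) : \alpha, r \in \mathbb{N}_0,\ r < k^\alpha\}$, and $f$ is asymptotically $k$-automatic if $\mathcal{N}_k(f)/{\simeq}$ is finite. $\Sigma_k=\{0,1,\dots,k-1\}$, $\Sigma_k^*$ is the set of all finite words over $\Sigma_k$ (including the empty word), $|u|$ is the length of $u$, and $[u]_k$ is the integer whose base-$k$ expansion (most significant digit first) is $u$ (with $[\text{empty word}]_k=0$). For a map $\phi\colon\Sigma_k^*\to\Omega'$,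 its $k$-kernel is $\{u \mapsto \phi(uv) : v \in \Sigma_k^*\}$ (where $uv$ is concatenation), and $\phi$ is $k$-automatic if this set is finite. *)

theory Defs
  imports Main "HOL-Library.Liminf_Limsup" "HOL-Library.Extended_Real"
begin

definition upper_density :: "nat set \<Rightarrow> ereal" where
  "upper_density A = limsup (\<lambda>N. ereal (real (card (A \<inter> {..<N})) / real N))"

definition almost_all :: "(nat \<Rightarrow> bool) \<Rightarrow> bool" where
  "almost_all P \<longleftrightarrow> upper_density {n. \<not> P n} = 0"

definition asym_eq :: "(nat \<Rightarrow> 'a) \<Rightarrow> (nat \<Rightarrow> 'a) \<Rightarrow> bool" where
  "asym_eq f g \<longleftrightarrow> almost_all (\<lambda>n. f n = g n)"

definition asym_rel :: "((nat \<Rightarrow> 'a) \<times> (nat \<Rightarrow> 'a)) set" where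
  "asym_rel = {(f, g). asym_eq f g}"

definition seq_kernel :: "nat \<Rightarrow> (nat \<Rightarrow> 'a) \<Rightarrow> (nat \<Rightarrow> 'a) set" where
  "seq_kernel k f = {(\<lambda>n. f (k ^ a * n + r)) | a r. r < k ^ a}"

definition asym_automatic :: "nat \<Rightarrow> (nat \<Rightarrow> 'a) \<Rightarrow> bool" where
  "asym_automatic k f \<longleftrightarrow> finite (seq_kernel k f // asym_rel)"

text \<open>Words over \<Sigma>_k are lists of digits < k; value [u]_k, most significant digit first.\<close>
definition word_val :: "nat \<Rightarrow> nat list \<Rightarrow> nat" where
  "word_val k u = foldl (\<lambda>acc d. k * acc + d) 0 u"

text \<open>k-kernel of a map on \<Sigma>_k^* (maps considered as functions on \<Sigma>_k^* only).\<close>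
definition word_kernel :: "nat \<Rightarrow> (nat list \<Rightarrow> 'b) \<Rightarrow> (nat list \<Rightarrow> 'b) set" where
  "word_kernel k \<phi> = {(\<lambda>u. if u \<in> lists {..<k} then \<phi> (u @ v) else undefined) | v. v \<in> lists {..<k}}"

definition word_automatic :: "nat \<Rightarrow> (nat list \<Rightarrow> 'b) \<Rightarrow> bool" where
  "word_automatic k \<phi> \<longleftrightarrow> finite (word_kernel k \<phi>)"

end

theory Submission
  imports Defs
begin

text \<open>
  Write f_u for the subsequence n \<mapsto> f(k^|u| n + [u]_k). The k-kernel of f consists exactly
  of the f_u, and f_uv arises from f_v by composition with the affine map n \<mapsto> k^|u| n + [u]_k.
  Affine preimages of sets of upper density zero have upper density zero, so this composition
  respects asymptotic equality. If the kernel has finitely many asymptotic classes, represented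
  by f_0, ..., f_(d-1), let \<phi>(u) be the index of the class of f_u: then the kernel entry
  u \<mapsto> \<phi>(uv) depends only on the class of f_v, that is, on \<phi>(v), so \<phi> is automatic.
  Conversely, if every f_u is asymptotically equal to one of finitely many f_i, the kernel has
  finitely many classes; this direction does not need \<phi> to be automatic.
\<close>

subsection \<open>Sets of upper density zero\<close>

definition count_ratio :: "nat set \<Rightarrow> nat \<Rightarrow> real" where
  "count_ratio A N = real (card (A \<inter> {..<N})) / real N"

lemma count_ratio_nonneg: "count_ratio A N \<ge> 0"
  by (simp add: count_ratio_def)

lemma upper_density_eq_0_iff: "upper_density A = 0 \<longleftrightarrow> count_ratio A \<longlonglongrightarrow> 0"
proof
  assume zero: "upper_density A = 0"
  show "count_ratio A \<longlonglongrightarrow> 0"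
  proof (rule order_tendstoI)
    fix a :: real
    assume "a < 0"
    then show "\<forall>\<^sub>F N in sequentially. a < count_ratio A N"
      using count_ratio_nonneg[of A] by (auto intro: always_eventually less_le_trans)
  next
    fix a :: real
    assume "0 < a"
    then have "limsup (\<lambda>N. ereal (count_ratio A N)) < ereal a"
      using zero by (simp add: upper_density_def count_ratio_def)
    from Limsup_lessD[OF this] show "\<forall>\<^sub>F N in sequentially. count_ratio A N < a"
      by simp
  qed
next
  assume "count_ratio A \<longlonglongrightarrow> 0"
  then have "(\<lambda>N. ereal (count_ratio A N)) \<longlonglongrightarrow> ereal 0"
    by (rule tendsto_ereal)
  from lim_imp_Limsup[OF _ this] show "upper_density A = 0"
    by (simp add: upper_density_def count_ratio_def zero_ereal_def)
qed

lemma upper_density_eq_0_if_count_ratio_le: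
  assumes "\<And>N. count_ratio A N \<le> g N" and "g \<longlonglongrightarrow> 0"
  shows "upper_density A = 0"
  unfolding upper_density_eq_0_iff
  by (rule tendsto_sandwich[of "\<lambda>_. 0" _ _ g]) (use assms count_ratio_nonneg in auto)

lemma upper_density_empty: "upper_density {} = 0"
  unfolding upper_density_eq_0_iff count_ratio_def by simp

lemma upper_density_eq_0_subset:
  assumes "A \<subseteq> B" and "upper_density B = 0"
  shows "upper_density A = 0"
proof (rule upper_density_eq_0_if_count_ratio_le)
  show "count_ratio A N \<le> count_ratio B N" for N
    unfolding count_ratio_def using assms(1) by (auto intro!: divide_right_mono card_mono)
  show "count_ratio B \<longlonglongrightarrow> 0"
    using assms(2) by (simp add: upper_density_eq_0_iff)
qed

lemma upper_density_eq_0_Un: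
  assumes "upper_density A = 0" and "upper_density B = 0"
  shows "upper_density (A \<union> B) = 0"
proof (rule upper_density_eq_0_if_count_ratio_le)
  show "count_ratio (A \<union> B) N \<le> count_ratio A N + count_ratio B N" for N
  proof -
    have "card ((A \<union> B) \<inter> {..<N}) \<le> card (A \<inter> {..<N}) + card (B \<inter> {..<N})"
      by (metis Int_Un_distrib2 card_Un_le)
    then show ?thesis
      unfolding count_ratio_def by (simp add: add_divide_distrib[symmetric] divide_right_mono)
  qed
  show "(\<lambda>N. count_ratio A N + count_ratio B N) \<longlonglongrightarrow> 0"
    using assms by (simp add: upper_density_eq_0_iff tendsto_add_zero)
qed

lemma count_ratio_affine_preimage:
  assumes "r < c"
  shows "count_ratio {n. c * n + r \<in> A} N \<le> real c * count_ratio A (c * N)"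
proof -
  have "card ({n. c * n + r \<in> A} \<inter> {..<N}) \<le> card (A \<inter> {..<c * N})"
  proof (rule card_inj_on_le)
    show "inj_on (\<lambda>n. c * n + r) ({n. c * n + r \<in> A} \<inter> {..<N})"
      using assms by (auto simp: inj_on_def)
    have "c * n + r < c * N" if "n < N" for n
    proof -
      have "c * n + r < c * Suc n"
        using assms by simp
      also have "\<dots> \<le> c * N"
        using that by (intro mult_le_mono2) simp
      finally show ?thesis .
    qed
    then show "(\<lambda>n. c * n + r) ` ({n. c * n + r \<in> A} \<inter> {..<N}) \<subseteq> A \<inter> {..<c * N}"
      by auto
  qed simp
  then show ?thesis
    using assms by (cases "N = 0") (simp_all add: count_ratio_def divide_right_mono)
qed

lemma upper_density_affine_preimage:
  assumes "r < c" and "upper_density A = 0"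
  shows "upper_density {n. c * n + r \<in> A} = 0"
proof (rule upper_density_eq_0_if_count_ratio_le)
  show "count_ratio {n. c * n + r \<in> A} N \<le> real c * count_ratio A (c * N)" for N
    using assms(1) by (rule count_ratio_affine_preimage)
  have "filterlim (\<lambda>N. c * N) at_top at_top"
    using assms(1) by (intro filterlim_subseq) (simp add: strict_mono_def)
  then have "(\<lambda>N. count_ratio A (c * N)) \<longlonglongrightarrow> 0"
    using assms(2) by (simp add: upper_density_eq_0_iff filterlim_compose)
  then show "(\<lambda>N. real c * count_ratio A (c * N)) \<longlonglongrightarrow> 0"
    by (rule tendsto_mult_right_zero)
qed

subsection \<open>Asymptotic equality\<close>

lemma asym_eq_refl: "asym_eq f f"
  by (simp add: asym_eq_def almost_all_def upper_density_empty)

lemma asym_eq_sym: "asym_eq f g \<Longrightarrow> asym_eq g f"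
proof -
  have "{n. g n \<noteq> f n} = {n. f n \<noteq> g n}"
    by auto
  then show "asym_eq f g \<Longrightarrow> asym_eq g f"
    by (simp add: asym_eq_def almost_all_def)
qed

lemma asym_eq_trans:
  assumes "asym_eq f g" and "asym_eq g h"
  shows "asym_eq f h"
proof -
  have "{n. f n \<noteq> h n} \<subseteq> {n. f n \<noteq> g n} \<union> {n. g n \<noteq> h n}"
    by auto
  moreover have "upper_density ({n. f n \<noteq> g n} \<union> {n. g n \<noteq> h n}) = 0"
    using assms by (simp add: asym_eq_def almost_all_def upper_density_eq_0_Un)
  ultimately show ?thesis
    unfolding asym_eq_def almost_all_def by (rule upper_density_eq_0_subset)
qed

lemma equiv_asym_rel: "equiv UNIV asym_rel"
  unfolding equiv_def refl_on_def sym_def trans_def asym_rel_def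
  using asym_eq_refl asym_eq_sym asym_eq_trans by blast

lemma asym_eq_comp_affine:
  assumes "asym_eq g h" and "r < c"
  shows "asym_eq (\<lambda>n. g (c * n + r)) (\<lambda>n. h (c * n + r))"
  using assms upper_density_affine_preimage[of r c "{m. g m \<noteq> h m}"]
  by (simp add: asym_eq_def almost_all_def)

subsection \<open>Finite quotients\<close>

lemma finite_quotient_iff_finite_cover:
  assumes "equiv UNIV R"
  shows "finite (A // R) \<longleftrightarrow> (\<exists>B. finite B \<and> A \<subseteq> R `` B)"
proof
  assume fin: "finite (A // R)"
  have "A \<subseteq> R `` ((\<lambda>X. SOME x. x \<in> X) ` (A // R))"
  proof
    fix a
    assume "a \<in> A"
    then have "R `` {a} \<in> A // R" and "a \<in> R `` {a}"
      using equiv_class_self[OF assms] by (auto intro: quotientI)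
    then have "(a, SOME x. x \<in> R `` {a}) \<in> R"
      by (metis someI Image_singleton_iff)
    then have "(SOME x. x \<in> R `` {a}, a) \<in> R"
      using assms by (meson equivE symD)
    with \<open>R `` {a} \<in> A // R\<close> show "a \<in> R `` ((\<lambda>X. SOME x. x \<in> X) ` (A // R))"
      by blast
  qed
  with fin show "\<exists>B. finite B \<and> A \<subseteq> R `` B"
    by blast
next
  assume "\<exists>B. finite B \<and> A \<subseteq> R `` B"
  then obtain B where "finite B" and cover: "A \<subseteq> R `` B"
    by blast
  have "A // R \<subseteq> (\<lambda>b. R `` {b}) ` B"
  proof
    fix X
    assume "X \<in> A // R"
    then obtain a where "a \<in> A" and X: "X = R `` {a}"
      by (rule quotientE)
    then obtain b where "b \<in> B" and "(b, a) \<in> R"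
      using cover by blast
    then show "X \<in> (\<lambda>b. R `` {b}) ` B"
      using assms X by (auto dest: equiv_class_eq)
  qed
  with \<open>finite B\<close> show "finite (A // R)"
    by (rule finite_surj)
qed

lemma finite_image_if_determined_by:
  assumes "finite (c ` A)" and "\<And>x y. x \<in> A \<Longrightarrow> y \<in> A \<Longrightarrow> c x = c y \<Longrightarrow> F x = F y"
  shows "finite (F ` A)"
proof -
  have "F ` A \<subseteq> (\<lambda>z. F (inv_into A c z)) ` c ` A"
  proof
    fix y
    assume "y \<in> F ` A"
    then obtain x where "x \<in> A" and "y = F x"
      by blast
    moreover have "inv_into A c (c x) \<in> A" and "c (inv_into A c (c x)) = c x"
      using \<open>x \<in> A\<close> by (auto intro: inv_into_into f_inv_into_f)
    ultimately have "y = F (inv_into A c (c x))"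
      using assms(2) by metis
    with \<open>x \<in> A\<close> show "y \<in> (\<lambda>z. F (inv_into A c z)) ` c ` A"
      by blast
  qed
  with assms(1) show ?thesis
    by (rule finite_surj)
qed

lemma finite_quotient_obtains_class_index:
  assumes "equiv UNIV R" and "finite (A // R)"
  obtains idx :: "'a \<Rightarrow> nat" and xs :: "'a list"
  where "\<And>a. a \<in> A \<Longrightarrow> idx a < length xs" and "\<And>a. a \<in> A \<Longrightarrow> (xs ! idx a, a) \<in> R"
    and "\<And>a b. a \<in> A \<Longrightarrow> b \<in> A \<Longrightarrow> idx a = idx b \<longleftrightarrow> (a, b) \<in> R"
proof -
  obtain B where "finite B" and cover: "A \<subseteq> R `` B"
    using assms finite_quotient_iff_finite_cover by blast
  then obtain xs where "set xs = B"
    using finite_list by blast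
  have covered: "\<exists>i < length xs. (xs ! i, a) \<in> R" if a: "a \<in> A" for a
  proof -
    obtain x where "x \<in> set xs" and "(x, a) \<in> R"
      using cover a \<open>set xs = B\<close> by blast
    then show ?thesis
      by (metis in_set_conv_nth)
  qed
  define idx where "idx a = (LEAST i. (xs ! i, a) \<in> R)" for a
  have idx_less: "idx a < length xs" and idx_class: "(xs ! idx a, a) \<in> R" if a: "a \<in> A" for a
  proof -
    obtain i where "i < length xs" and i: "(xs ! i, a) \<in> R"
      using covered[OF a] by blast
    moreover have "idx a \<le> i"
      unfolding idx_def using i by (rule Least_le)
    ultimately show "idx a < length xs"
      by simp
    show "(xs ! idx a, a) \<in> R"
      unfolding idx_def using i by (rule LeastI)
  qed
  have "idx a = idx b \<longleftrightarrow> (a, b) \<in> R" if "a \<in> A" and "b \<in> A" for a b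
  proof
    assume "idx a = idx b"
    then show "(a, b) \<in> R"
      using idx_class[OF that(1)] idx_class[OF that(2)] assms(1)
      by (metis equiv_def symD transD)
  next
    assume "(a, b) \<in> R"
    then have "(xs ! i, a) \<in> R \<longleftrightarrow> (xs ! i, b) \<in> R" for i
      using assms(1) by (meson equiv_def symD transD)
    then show "idx a = idx b"
      by (simp add: idx_def)
  qed
  with idx_less idx_class show ?thesis
    by (rule that)
qed

subsection \<open>Base-k words and the kernel\<close>

lemma word_val_Nil [simp]: "word_val k [] = 0"
  by (simp add: word_val_def)

lemma word_val_snoc: "word_val k (u @ [x]) = k * word_val k u + x"
  by (simp add: word_val_def)

lemma word_val_append: "word_val k (u @ v) = k ^ length v * word_val k u + word_val k v"
proof (induction v rule: rev_induct)
  case Nil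
  then show ?case by simp
next
  case (snoc x v)
  then show ?case
    using word_val_snoc[of k "u @ v" x] word_val_snoc[of k v x] by (simp add: algebra_simps)
qed

lemma word_val_less:
  assumes "u \<in> lists {..<k}"
  shows "word_val k u < k ^ length u"
  using assms
proof (induction u rule: rev_induct)
  case Nil
  then show ?case by simp
next
  case (snoc x u)
  then have "x < k" and "word_val k u < k ^ length u"
    by auto
  then have "k * word_val k u + x < k * Suc (word_val k u)"
    by simp
  also have "\<dots> \<le> k * k ^ length u"
    using \<open>word_val k u < k ^ length u\<close> by (intro mult_le_mono2) simp
  finally show ?case
    by (simp add: word_val_snoc)
qed

lemma ex_word_val_eq:
  assumes "0 < k" and "r < k ^ a"
  shows "\<exists>u \<in> lists {..<k}. length u = a \<and> word_val k u = r"
  using assms(2)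
proof (induction a arbitrary: r)
  case 0
  then show ?case by (intro bexI[of _ "[]"]) auto
next
  case (Suc a)
  then have "r div k < k ^ a"
    by (simp add: div_less_iff_less_mult mult.commute assms(1))
  then obtain u where u: "u \<in> lists {..<k}" "length u = a" "word_val k u = r div k"
    using Suc.IH by blast
  have "word_val k (u @ [r mod k]) = r"
    by (simp add: word_val_snoc u)
  with u assms(1) show ?case
    by (intro bexI[of _ "u @ [r mod k]"]) auto
qed

definition word_subseq :: "nat \<Rightarrow> (nat \<Rightarrow> 'a) \<Rightarrow> nat list \<Rightarrow> nat \<Rightarrow> 'a" where
  "word_subseq k f u = (\<lambda>n. f (k ^ length u * n + word_val k u))"

lemma seq_kernel_eq_word_subseq:
  assumes "0 < k"
  shows "seq_kernel k f = word_subseq k f ` lists {..<k}"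
proof
  show "seq_kernel k f \<subseteq> word_subseq k f ` lists {..<k}"
  proof
    fix g
    assume "g \<in> seq_kernel k f"
    then obtain a r where g: "g = (\<lambda>n. f (k ^ a * n + r))" and "r < k ^ a"
      by (auto simp: seq_kernel_def)
    then obtain u where "u \<in> lists {..<k}" "length u = a" "word_val k u = r"
      using ex_word_val_eq[OF assms] by blast
    with g show "g \<in> word_subseq k f ` lists {..<k}"
      by (auto simp: word_subseq_def)
  qed
  show "word_subseq k f ` lists {..<k} \<subseteq> seq_kernel k f"
    using word_val_less by (fastforce simp: word_subseq_def seq_kernel_def)
qed

lemma word_subseq_append:
  "word_subseq k f (u @ v) = (\<lambda>n. word_subseq k f v (k ^ length u * n + word_val k u))"
  by (simp add: word_subseq_def word_val_append power_add algebra_simps)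

lemma asym_eq_word_subseq_append:
  assumes "u \<in> lists {..<k}" and "asym_eq (word_subseq k f v) (word_subseq k f w)"
  shows "asym_eq (word_subseq k f (u @ v)) (word_subseq k f (u @ w))"
  unfolding word_subseq_append using assms(2) word_val_less[OF assms(1)]
  by (rule asym_eq_comp_affine)

lemma asym_eq_word_subseq_iff:
  "asym_eq (word_subseq k f u) g \<longleftrightarrow> almost_all (\<lambda>n. f (k ^ length u * n + word_val k u) = g n)"
  by (simp add: asym_eq_def word_subseq_def)

lemma word_automatic_if_class_index:
  assumes "finite (\<phi> ` lists {..<k})"
    and "\<And>v w. v \<in> lists {..<k} \<Longrightarrow> w \<in> lists {..<k} \<Longrightarrow>
      \<phi> v = \<phi> w \<longleftrightarrow> asym_eq (word_subseq k f v) (word_subseq k f w)"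
  shows "word_automatic k \<phi>"
proof -
  let ?W = "lists {..<k}"
  define K where "K v = (\<lambda>u. if u \<in> ?W then \<phi> (u @ v) else undefined)" for v
  have "finite (K ` ?W)"
  proof (rule finite_image_if_determined_by)
    show "finite (\<phi> ` ?W)"
      by (fact assms(1))
    fix v w
    assume "v \<in> ?W" and "w \<in> ?W" and "\<phi> v = \<phi> w"
    then have "asym_eq (word_subseq k f v) (word_subseq k f w)"
      using assms(2) by blast
    show "K v = K w"
    proof
      fix u
      show "K v u = K w u"
      proof (cases "u \<in> ?W")
        case True
        then have "asym_eq (word_subseq k f (u @ v)) (word_subseq k f (u @ w))"
          using \<open>asym_eq (word_subseq k f v) (word_subseq k f w)\<close>
          by (rule asym_eq_word_subseq_append)
        moreover have "u @ v \<in> ?W" and "u @ w \<in> ?W"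
          using True \<open>v \<in> ?W\<close> \<open>w \<in> ?W\<close> by auto
        ultimately show ?thesis
          using True assms(2) by (simp add: K_def)
      qed (simp add: K_def)
    qed
  qed
  then show ?thesis
    by (simp add: word_automatic_def word_kernel_def K_def Setcompr_eq_image)
qed

lemma asym_automatic_imp_automatic_class_index:
  assumes "0 < k" and "asym_automatic k f"
  obtains d \<phi> fs where "(d::nat) \<ge> 1" and "word_automatic k \<phi>" and "\<forall>u \<in> lists {..<k}. \<phi> u < d"
    and "\<forall>u \<in> lists {..<k}. asym_eq (word_subseq k f u) (fs (\<phi> u))"
proof -
  let ?W = "lists {..<k}" and ?f = "word_subseq k f"
  have "finite (?f ` ?W // asym_rel)"
    using assms by (simp add: asym_automatic_def seq_kernel_eq_word_subseq)
  then obtain idx gs where idx_less: "\<And>g. g \<in> ?f ` ?W \<Longrightarrow> idx g < length gs"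
    and idx_class: "\<And>g. g \<in> ?f ` ?W \<Longrightarrow> (gs ! idx g, g) \<in> asym_rel"
    and idx_eq_iff: "\<And>g h. g \<in> ?f ` ?W \<Longrightarrow> h \<in> ?f ` ?W \<Longrightarrow> idx g = idx h \<longleftrightarrow> (g, h) \<in> asym_rel"
    using finite_quotient_obtains_class_index[OF equiv_asym_rel] by blast
  have "word_automatic k (idx \<circ> ?f)"
  proof (rule word_automatic_if_class_index)
    show "finite ((idx \<circ> ?f) ` ?W)"
      by (rule finite_subset[of _ "{..<length gs}"]) (auto intro: idx_less)
  qed (simp add: idx_eq_iff asym_rel_def)
  moreover have "length gs \<ge> 1"
    using idx_less[of "?f []"] by simp
  ultimately show ?thesis
    using idx_less idx_class asym_eq_sym
    by (intro that[of "length gs" "idx \<circ> ?f" "(!) gs"]) (auto simp: asym_rel_def)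
qed

lemma asym_automatic_if_finite_class_index:
  assumes "0 < k" and "\<forall>u \<in> lists {..<k}. \<phi> u < (d::nat)"
    and "\<forall>u \<in> lists {..<k}. asym_eq (word_subseq k f u) (fs (\<phi> u))"
  shows "asym_automatic k f"
  unfolding asym_automatic_def seq_kernel_eq_word_subseq[OF assms(1)]
    finite_quotient_iff_finite_cover[OF equiv_asym_rel]
proof (intro exI conjI)
  show "finite (fs ` {..<d})"
    by simp
  show "word_subseq k f ` lists {..<k} \<subseteq> asym_rel `` (fs ` {..<d})"
  proof
    fix g
    assume "g \<in> word_subseq k f ` lists {..<k}"
    then obtain u where "u \<in> lists {..<k}" and g: "g = word_subseq k f u"
      by blast
    then have "asym_eq (fs (\<phi> u)) g" and "fs (\<phi> u) \<in> fs ` {..<d}"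
      using assms(2) asym_eq_sym[OF bspec[OF assms(3)]] by auto
    then show "g \<in> asym_rel `` (fs ` {..<d})"
      by (auto simp: asym_rel_def)
  qed
qed

theorem lemma2p3:
  fixes f :: "nat \<Rightarrow> 'a::finite" and k :: nat
  assumes "k \<ge> 2"
  shows "asym_automatic k f \<longleftrightarrow>
    (\<exists>(d::nat) (fs :: nat \<Rightarrow> nat \<Rightarrow> 'a) (\<phi> :: nat list \<Rightarrow> nat).
       d \<ge> 1 \<and> word_automatic k \<phi> \<and> (\<forall>u\<in>lists {..<k}. \<phi> u < d) \<and>
       (\<forall>u\<in>lists {..<k}. almost_all (\<lambda>n. f (k ^ length u * n + word_val k u) = fs (\<phi> u) n)))"
proof -
  from assms have "0 < k"
    by simp
  show ?thesis
  proof
    assume "asym_automatic k f"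
    with \<open>0 < k\<close> obtain d \<phi> fs where "(d::nat) \<ge> 1" and "word_automatic k \<phi>"
      and "\<forall>u \<in> lists {..<k}. \<phi> u < d"
      and "\<forall>u \<in> lists {..<k}. asym_eq (word_subseq k f u) (fs (\<phi> u))"
      by (rule asym_automatic_imp_automatic_class_index)
    then show "\<exists>(d::nat) fs \<phi>. d \<ge> 1 \<and> word_automatic k \<phi> \<and> (\<forall>u\<in>lists {..<k}. \<phi> u < d) \<and>
       (\<forall>u\<in>lists {..<k}. almost_all (\<lambda>n. f (k ^ length u * n + word_val k u) = fs (\<phi> u) n))"
      by (intro exI[of _ d] exI[of _ fs] exI[of _ \<phi>]) (simp add: asym_eq_word_subseq_iff)
  next
    assume "\<exists>(d::nat) fs \<phi>. d \<ge> 1 \<and> word_automatic k \<phi> \<and> (\<forall>u\<in>lists {..<k}. \<phi> u < d) \<and>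
       (\<forall>u\<in>lists {..<k}. almost_all (\<lambda>n. f (k ^ length u * n + word_val k u) = fs (\<phi> u) n))"
    then obtain d \<phi> fs where "\<forall>u \<in> lists {..<k}. \<phi> u < (d::nat)"
      and "\<forall>u \<in> lists {..<k}. almost_all (\<lambda>n. f (k ^ length u * n + word_val k u) = fs (\<phi> u) n)"
      by blast
    with \<open>0 < k\<close> show "asym_automatic k f"
      by (intro asym_automatic_if_finite_class_index[of k \<phi> d f fs])
        (simp_all add: asym_eq_word_subseq_iff)
  qed
qed

end
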